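(* Let $(X,\mathcal{T})$ be a finite topological space. Then the consistency radius $(\mathcal{S},a)\mapsto c_{\mathcal{S}}(a)$ is a continuous function $\mathbf{ShvPA}(X,\mathcal{T})\to\mathbb{R}$, where $\mathbf{ShvPA}(X,\mathcal{T})$ carries the topology described in the context.
   Context: A sheaf $\mathcal{S}$ of pseudometric spaces on a topological space $(X,\mathcal{T})$ is a sheaf of sets on $(X,\mathcal{T})$ together with a pseudometric $d_U$ on each $\mathcal{S}(U)$, $U\in\mathcal{T}$, such that every restriction map $\mathcal{S}(U\subseteq V):\mathcal{S}(V)\to\mathcal{S}(U)$ is continuous. An assignment to $\mathcal{S}$ is any element $a\in\prod_{U\in\mathcal{T}}\mathcal{S}(U)$ (no compatibility required). The assignment pseudometric is $D(a,b)=\sup_{U\in\mathcal{T}} d_U(a(U),b(U))$. The consistency radius of $a$ is $c_{\mathcal{S}}(a)=\sup_{U\subseteq V\in\mathcal{T}} d_U\big(\mathcal{S}(U\subseteq V)(a(V)),a(U)\big)$. The objects of $\mathbf{ShvPA}(X,\mathcal{T})$ are pairs $(\mathcal{S},a)$ with $\mathcal{S}$ a sheaf of pseudometric spaces on $(X,\mathcal{T})$ and $a$ an assignment to $\mathcal{S}$. This set is topologized as follows. Partition the pairs according to the isomorphism class of the underlying sheaf. In one class, fix a representative $\mathcal{S}$; every sheaf $\mathcal{R}$ in the class is regarded (via the isomorphism) as having the same stalks $\mathcal{S}(U)$ but possibly different restriction maps $\mathcal{R}(U\subseteq V)\in C(\mathcal{S}(V),\mathcal{S}(U))$, and its assignments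 as elements of $\prod_{U\in\mathcal{T}}\mathcal{S}(U)$. Thus the class is identified with a subset of $\prod_{U\subseteq V\in\mathcal{T}} C(\mathcal{S}(V),\mathcal{S}(U))\times\prod_{U\in\mathcal{T}}\mathcal{S}(U)$ and given the subspace topology, where each $C(\mathcal{S}(V),\mathcal{S}(U))$ carries the topology of uniform convergence (pseudometric $(f,g)\mapsto\sup_{x}d_U(f(x),g(x))$) and $\prod_{U}\mathcal{S}(U)$ carries the topology of the assignment pseudometric. $\mathbf{ShvPA}(X,\mathcal{T})$ is the disjoint union of these classes. *)

theory Defs
  imports "HOL-Analysis.Analysis"
begin

text \<open>Stalks of all open sets are represented as subsets of one ambient type 'a.
  Restriction maps are indexed by pairs (U,V) with U \<subseteq> V open.\<close>

definition pseudometric_on :: "'a set \<Rightarrow> ('a \<Rightarrow> 'a \<Rightarrow> real) \<Rightarrow> bool" where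
  "pseudometric_on A d \<longleftrightarrow>
     (\<forall>x\<in>A. d x x = 0) \<and>
     (\<forall>x\<in>A. \<forall>y\<in>A. 0 \<le> d x y \<and> d x y = d y x) \<and>
     (\<forall>x\<in>A. \<forall>y\<in>A. \<forall>z\<in>A. d x z \<le> d x y + d y z)"

definition pm_continuous ::
  "'a set \<Rightarrow> ('a \<Rightarrow> 'a \<Rightarrow> real) \<Rightarrow> ('b \<Rightarrow> 'b \<Rightarrow> real) \<Rightarrow> ('a \<Rightarrow> 'b) \<Rightarrow> bool" where
  "pm_continuous A dA dB f \<longleftrightarrow>
     (\<forall>x\<in>A. \<forall>e>0. \<exists>\<delta>>0. \<forall>y\<in>A. dA x y < \<delta> \<longrightarrow> dB (f x) (f y) < e)"

definition Incl :: "'x topology \<Rightarrow> ('x set \<times> 'x set) set" where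
  "Incl T = {(U, V). openin T U \<and> openin T V \<and> U \<subseteq> V}"

definition presheaf_on ::
  "'x topology \<Rightarrow> ('x set \<Rightarrow> 'a set) \<Rightarrow> ('x set \<times> 'x set \<Rightarrow> 'a \<Rightarrow> 'a) \<Rightarrow> bool" where
  "presheaf_on T stalk R \<longleftrightarrow>
     (\<forall>(U, V)\<in>Incl T. R (U, V) \<in> stalk V \<rightarrow> stalk U) \<and>
     (\<forall>U. openin T U \<longrightarrow> (\<forall>x\<in>stalk U. R (U, U) x = x)) \<and>
     (\<forall>U V W. openin T U \<and> openin T V \<and> openin T W \<and> U \<subseteq> V \<and> V \<subseteq> W \<longrightarrow>
        (\<forall>x\<in>stalk W. R (U, V) (R (V, W) x) = R (U, W) x))"

definition sheaf_on ::
  "'x topology \<Rightarrow> ('x set \<Rightarrow> 'a set) \<Rightarrow> ('x set \<times> 'x set \<Rightarrow> 'a \<Rightarrow> 'a) \<Rightarrow> bool" where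
  "sheaf_on T stalk R \<longleftrightarrow> presheaf_on T stalk R \<and>
     (\<forall>U \<U>. openin T U \<and> (\<forall>V\<in>\<U>. openin T V) \<and> \<Union>\<U> = U \<longrightarrow>
        (\<forall>s\<in>stalk U. \<forall>t\<in>stalk U. (\<forall>V\<in>\<U>. R (V, U) s = R (V, U) t) \<longrightarrow> s = t) \<and>
        (\<forall>f. (\<forall>V\<in>\<U>. f V \<in> stalk V) \<and>
              (\<forall>V\<in>\<U>. \<forall>W\<in>\<U>. R (V \<inter> W, V) (f V) = R (V \<inter> W, W) (f W)) \<longrightarrow>
              (\<exists>s\<in>stalk U. \<forall>V\<in>\<U>. R (V, U) s = f V)))"

definition sheaf_pm ::
  "'x topology \<Rightarrow> ('x set \<Rightarrow> 'a set) \<Rightarrow> ('x set \<Rightarrow> 'a \<Rightarrow> 'a \<Rightarrow> real)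
     \<Rightarrow> ('x set \<times> 'x set \<Rightarrow> 'a \<Rightarrow> 'a) \<Rightarrow> bool" where
  "sheaf_pm T stalk d R \<longleftrightarrow> sheaf_on T stalk R \<and>
     (\<forall>U. openin T U \<longrightarrow> pseudometric_on (stalk U) (d U)) \<and>
     (\<forall>(U, V)\<in>Incl T. pm_continuous (stalk V) (d V) (d U) (R (U, V)))"

definition consistency_radius ::
  "'x topology \<Rightarrow> ('x set \<Rightarrow> 'a \<Rightarrow> 'a \<Rightarrow> real) \<Rightarrow> ('x set \<times> 'x set \<Rightarrow> 'a \<Rightarrow> 'a)
     \<Rightarrow> ('x set \<Rightarrow> 'a) \<Rightarrow> real" where
  "consistency_radius T d R a =
     (SUP p\<in>Incl T. d (fst p) (R p (a (snd p))) (a (fst p)))"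

definition pm_topology :: "'b set \<Rightarrow> ('b \<Rightarrow> 'b \<Rightarrow> ereal) \<Rightarrow> 'b topology" where
  "pm_topology A D = topology (\<lambda>S. S \<subseteq> A \<and>
      (\<forall>x\<in>S. \<exists>e>0. \<forall>y\<in>A. D x y < ereal e \<longrightarrow> y \<in> S))"

definition unif_dist :: "'a set \<Rightarrow> ('b \<Rightarrow> 'b \<Rightarrow> real) \<Rightarrow> ('a \<Rightarrow> 'b) \<Rightarrow> ('a \<Rightarrow> 'b) \<Rightarrow> ereal" where
  "unif_dist A dB f g = (SUP x\<in>A. ereal (dB (f x) (g x)))"

definition assign_dist ::
  "'x topology \<Rightarrow> ('x set \<Rightarrow> 'a \<Rightarrow> 'a \<Rightarrow> real) \<Rightarrow> ('x set \<Rightarrow> 'a) \<Rightarrow> ('x set \<Rightarrow> 'a) \<Rightarrow> ereal" where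
  "assign_dist T d a b = (SUP U\<in>{U. openin T U}. ereal (d U (a U) (b U)))"

definition Cont ::
  "('x set \<Rightarrow> 'a set) \<Rightarrow> ('x set \<Rightarrow> 'a \<Rightarrow> 'a \<Rightarrow> real) \<Rightarrow> 'x set \<times> 'x set \<Rightarrow> ('a \<Rightarrow> 'a) set" where
  "Cont stalk d p = {f \<in> extensional (stalk (snd p)).
      f \<in> stalk (snd p) \<rightarrow> stalk (fst p) \<and>
      pm_continuous (stalk (snd p)) (d (snd p)) (d (fst p)) f}"

definition unif_top ::
  "('x set \<Rightarrow> 'a set) \<Rightarrow> ('x set \<Rightarrow> 'a \<Rightarrow> 'a \<Rightarrow> real) \<Rightarrow> 'x set \<times> 'x set \<Rightarrow> ('a \<Rightarrow> 'a) topology" where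
  "unif_top stalk d p = pm_topology (Cont stalk d p) (unif_dist (stalk (snd p)) (d (fst p)))"

definition assign_top ::
  "'x topology \<Rightarrow> ('x set \<Rightarrow> 'a set) \<Rightarrow> ('x set \<Rightarrow> 'a \<Rightarrow> 'a \<Rightarrow> real) \<Rightarrow> ('x set \<Rightarrow> 'a) topology" where
  "assign_top T stalk d = pm_topology (Pi\<^sub>E {U. openin T U} stalk) (assign_dist T d)"

text \<open>The ambient space  prod_{U \<subseteq> V} C(S(V),S(U)) \<times> prod_U S(U).\<close>
definition ShvPA_top ::
  "'x topology \<Rightarrow> ('x set \<Rightarrow> 'a set) \<Rightarrow> ('x set \<Rightarrow> 'a \<Rightarrow> 'a \<Rightarrow> real)
     \<Rightarrow> ((('x set \<times> 'x set) \<Rightarrow> 'a \<Rightarrow> 'a) \<times> ('x set \<Rightarrow> 'a)) topology" where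
  "ShvPA_top T stalk d =
     prod_topology (product_topology (unif_top stalk d) (Incl T)) (assign_top T stalk d)"

definition sheaf_iso ::
  "'x topology \<Rightarrow> ('x set \<Rightarrow> 'a set) \<Rightarrow> ('x set \<times> 'x set \<Rightarrow> 'a \<Rightarrow> 'a)
     \<Rightarrow> ('x set \<times> 'x set \<Rightarrow> 'a \<Rightarrow> 'a) \<Rightarrow> bool" where
  "sheaf_iso T stalk R S \<longleftrightarrow> (\<exists>\<phi>.
     (\<forall>U. openin T U \<longrightarrow> bij_betw (\<phi> U) (stalk U) (stalk U)) \<and>
     (\<forall>(U, V)\<in>Incl T. \<forall>x\<in>stalk V. \<phi> U (S (U, V) x) = R (U, V) (\<phi> V x)))"

text \<open>The component of ShvPA(X,T) of the isomorphism class of S, as a subset of the ambient space.\<close>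
definition ShvPA_class ::
  "'x topology \<Rightarrow> ('x set \<Rightarrow> 'a set) \<Rightarrow> ('x set \<Rightarrow> 'a \<Rightarrow> 'a \<Rightarrow> real)
     \<Rightarrow> ('x set \<times> 'x set \<Rightarrow> 'a \<Rightarrow> 'a)
     \<Rightarrow> ((('x set \<times> 'x set) \<Rightarrow> 'a \<Rightarrow> 'a) \<times> ('x set \<Rightarrow> 'a)) set" where
  "ShvPA_class T stalk d S = {(R, a) \<in> topspace (ShvPA_top T stalk d).
      sheaf_pm T stalk d R \<and> sheaf_iso T stalk R S}"

end

theory Submission
  imports Defs
begin

text \<open>On a finite space the consistency radius is the maximum of the finitely many discrepancies
  \<open>d\<^sub>U(R\<^sub>U\<^sub>V(a\<^sub>V), a\<^sub>U)\<close>, so it suffices that each discrepancy is continuous on the whole ambient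
  product space. Passing from \<open>(R, a)\<close> to \<open>(R', a')\<close> changes it by at most
  \<open>d\<^sub>U(R\<^sub>U\<^sub>V(a\<^sub>V), R\<^sub>U\<^sub>V(a'\<^sub>V)) + d\<^sub>U(R\<^sub>U\<^sub>V(a'\<^sub>V), R'\<^sub>U\<^sub>V(a'\<^sub>V)) + d\<^sub>U(a\<^sub>U, a'\<^sub>U)\<close>: the first term is small
  by continuity of \<open>R\<^sub>U\<^sub>V\<close> at \<open>a\<^sub>V\<close>, the second is bounded by the uniform distance of the
  restriction maps and the last by the assignment distance.\<close>

lemma istopology_pm_topology:
  "istopology (\<lambda>S. S \<subseteq> A \<and> (\<forall>x\<in>S. \<exists>e>0. \<forall>y\<in>A. D x y < ereal e \<longrightarrow> y \<in> S))"
  unfolding istopology_def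
proof (rule conjI; intro allI impI)
  fix S T
  assume S: "S \<subseteq> A \<and> (\<forall>x\<in>S. \<exists>e>0. \<forall>y\<in>A. D x y < ereal e \<longrightarrow> y \<in> S)"
    and T: "T \<subseteq> A \<and> (\<forall>x\<in>T. \<exists>e>0. \<forall>y\<in>A. D x y < ereal e \<longrightarrow> y \<in> T)"
  show "S \<inter> T \<subseteq> A \<and> (\<forall>x\<in>S \<inter> T. \<exists>e>0. \<forall>y\<in>A. D x y < ereal e \<longrightarrow> y \<in> S \<inter> T)"
  proof (intro conjI ballI)
    show "S \<inter> T \<subseteq> A"
      using S by (meson inf.coboundedI1)
  next
    fix x assume x: "x \<in> S \<inter> T"
    obtain e1 where "e1 > 0" "\<forall>y\<in>A. D x y < ereal e1 \<longrightarrow> y \<in> S"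
      using S x by (meson IntD1)
    moreover obtain e2 where "e2 > 0" "\<forall>y\<in>A. D x y < ereal e2 \<longrightarrow> y \<in> T"
      using T x by (meson IntD2)
    ultimately show "\<exists>e>0. \<forall>y\<in>A. D x y < ereal e \<longrightarrow> y \<in> S \<inter> T"
      by (intro exI[of _ "min e1 e2"]) auto
  qed
next
  fix \<K> assume "\<forall>S\<in>\<K>. S \<subseteq> A \<and> (\<forall>x\<in>S. \<exists>e>0. \<forall>y\<in>A. D x y < ereal e \<longrightarrow> y \<in> S)"
  then show "\<Union>\<K> \<subseteq> A \<and> (\<forall>x\<in>\<Union>\<K>. \<exists>e>0. \<forall>y\<in>A. D x y < ereal e \<longrightarrow> y \<in> \<Union>\<K>)"
    by (meson Union_iff Union_least)
qed

lemma openin_pm_topology: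
  "openin (pm_topology A D) S \<longleftrightarrow>
     S \<subseteq> A \<and> (\<forall>x\<in>S. \<exists>e>0. \<forall>y\<in>A. D x y < ereal e \<longrightarrow> y \<in> S)"
  unfolding pm_topology_def by (simp add: istopology_pm_topology)

lemma topspace_pm_topology [simp]: "topspace (pm_topology A D) = A"
proof -
  have "openin (pm_topology A D) A"
    unfolding openin_pm_topology by (auto intro: exI[of _ 1])
  then show ?thesis
    by (metis openin_pm_topology openin_subset openin_topspace subset_antisym)
qed

lemma ereal_less_add_margin:
  assumes "u < ereal r"
  obtains e where "e > 0" "\<And>c. c < ereal e \<Longrightarrow> u + c < ereal r"
proof (cases u)
  case (real v)
  have "u + c < ereal r" if "c < ereal (r - v)" for c
    using that real by (cases c) auto
  moreover have "r - v > 0"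
    using assms real by simp
  ultimately show ?thesis
    using that by blast
next
  case MInf
  have "u + c < ereal r" if "c < ereal 1" for c
    using that MInf by (cases c) auto
  then show ?thesis
    using that[of 1] by simp
qed (use assms in simp)

lemma openin_pm_topology_ball:
  assumes triangle: "\<And>x y z. \<lbrakk>x \<in> A; y \<in> A; z \<in> A\<rbrakk> \<Longrightarrow> D x z \<le> D x y + D y z"
    and "x \<in> A"
  shows "openin (pm_topology A D) {y \<in> A. D x y < ereal r}"
  unfolding openin_pm_topology
proof (intro conjI ballI)
  fix y assume "y \<in> {y \<in> A. D x y < ereal r}"
  then have y: "y \<in> A" "D x y < ereal r"
    by auto
  obtain e where "e > 0" and e: "\<And>c. c < ereal e \<Longrightarrow> D x y + c < ereal r"
    using ereal_less_add_margin[OF y(2)] by metis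
  have "D x z < ereal r" if "z \<in> A" "D y z < ereal e" for z
  proof -
    have "D x z \<le> D x y + D y z"
      using triangle \<open>x \<in> A\<close> y(1) that(1) .
    also have "\<dots> < ereal r"
      using e that(2) .
    finally show ?thesis .
  qed
  with \<open>e > 0\<close> show "\<exists>e>0. \<forall>z\<in>A. D y z < ereal e \<longrightarrow> z \<in> {y \<in> A. D x y < ereal r}"
    by (intro exI[of _ e]) auto
qed auto

lemma pseudometric_onD:
  assumes "pseudometric_on A d" "x \<in> A" "y \<in> A" "z \<in> A"
  shows "d x x = 0" "d x y = d y x" "d x z \<le> d x y + d y z"
  using assms unfolding pseudometric_on_def by blast+

lemma pseudometric_on_dist_diff_le:
  assumes "pseudometric_on A d" "x \<in> A" "x' \<in> A" "y \<in> A" "y' \<in> A" "m \<in> A"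
  shows "\<bar>d x y - d x' y'\<bar> \<le> d x m + d m x' + d y y'"
proof -
  have "d x' y' \<le> d x' x + d x y'" "d x y' \<le> d x y + d y y'"
    "d x y \<le> d x x' + d x' y" "d x' y \<le> d x' y' + d y' y"
    "d x x' \<le> d x m + d m x'" "d x' x = d x x'" "d y' y = d y y'"
    using pseudometric_onD[OF assms(1)] assms(2-) by meson+
  then show ?thesis
    by linarith
qed

lemma SUP_pseudometric_triangle:
  assumes "\<And>i. i \<in> I \<Longrightarrow> pseudometric_on (A i) (d i)"
    and "\<And>i. i \<in> I \<Longrightarrow> f i \<in> A i" "\<And>i. i \<in> I \<Longrightarrow> g i \<in> A i" "\<And>i. i \<in> I \<Longrightarrow> h i \<in> A i"
  shows "(SUP i\<in>I. ereal (d i (f i) (h i)))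
           \<le> (SUP i\<in>I. ereal (d i (f i) (g i))) + (SUP i\<in>I. ereal (d i (g i) (h i)))"
proof (rule SUP_least)
  fix i assume i: "i \<in> I"
  then have "ereal (d i (f i) (h i)) \<le> ereal (d i (f i) (g i)) + ereal (d i (g i) (h i))"
    using pseudometric_onD(3)[OF assms(1)] assms(2-4) by simp
  also have "\<dots> \<le> (SUP i\<in>I. ereal (d i (f i) (g i))) + (SUP i\<in>I. ereal (d i (g i) (h i)))"
    using i by (intro add_mono SUP_upper)
  finally show "ereal (d i (f i) (h i)) \<le> \<dots>" .
qed

lemma SUP_pseudometric_self:
  assumes "\<And>i. i \<in> I \<Longrightarrow> pseudometric_on (A i) (d i)" "\<And>i. i \<in> I \<Longrightarrow> f i \<in> A i"
  shows "(SUP i\<in>I. ereal (d i (f i) (f i))) \<le> 0"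
proof (rule SUP_least)
  fix i assume "i \<in> I"
  then show "ereal (d i (f i) (f i)) \<le> 0"
    using pseudometric_onD(1)[OF assms(1)] assms(2) by (metis order_refl zero_ereal_def)
qed

lemma unif_dist_lessD:
  "unif_dist A dB f g < ereal r \<Longrightarrow> x \<in> A \<Longrightarrow> dB (f x) (g x) < r"
  unfolding unif_dist_def by (metis SUP_upper less_ereal.simps(1) order_le_less_trans)

lemma assign_dist_lessD:
  "assign_dist T d a b < ereal r \<Longrightarrow> openin T U \<Longrightarrow> d U (a U) (b U) < r"
  unfolding assign_dist_def by (metis SUP_upper less_ereal.simps(1) mem_Collect_eq order_le_less_trans)

lemma Cont_mem_stalk: "f \<in> Cont stalk d p \<Longrightarrow> x \<in> stalk (snd p) \<Longrightarrow> f x \<in> stalk (fst p)"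
  unfolding Cont_def by auto

lemma unif_dist_self_less:
  assumes "pseudometric_on (stalk (fst p)) (d (fst p))" "f \<in> Cont stalk d p" "r > 0"
  shows "unif_dist (stalk (snd p)) (d (fst p)) f f < ereal r"
proof -
  have "unif_dist (stalk (snd p)) (d (fst p)) f f \<le> 0"
    unfolding unif_dist_def using assms(1,2) by (intro SUP_pseudometric_self) (auto intro: Cont_mem_stalk)
  with assms(3) show ?thesis
    by (simp add: order_le_less_trans)
qed

lemma assign_dist_self_less:
  assumes "\<And>U. openin T U \<Longrightarrow> pseudometric_on (stalk U) (d U)"
    and "a \<in> Pi\<^sub>E {U. openin T U} stalk" "r > 0"
  shows "assign_dist T d a a < ereal r"
proof -
  have "assign_dist T d a a \<le> 0"
    unfolding assign_dist_def using assms(1,2) by (intro SUP_pseudometric_self) auto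
  with assms(3) show ?thesis
    by (simp add: order_le_less_trans)
qed

lemma openin_unif_top_ball:
  assumes "pseudometric_on (stalk (fst p)) (d (fst p))" "f \<in> Cont stalk d p"
  shows "openin (unif_top stalk d p)
           {g \<in> Cont stalk d p. unif_dist (stalk (snd p)) (d (fst p)) f g < ereal r}"
  unfolding unif_top_def
proof (rule openin_pm_topology_ball[OF _ assms(2)])
  fix f g h assume "f \<in> Cont stalk d p" "g \<in> Cont stalk d p" "h \<in> Cont stalk d p"
  then show "unif_dist (stalk (snd p)) (d (fst p)) f h
               \<le> unif_dist (stalk (snd p)) (d (fst p)) f g + unif_dist (stalk (snd p)) (d (fst p)) g h"
    unfolding unif_dist_def using assms(1) by (intro SUP_pseudometric_triangle) (auto intro: Cont_mem_stalk)
qed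

lemma openin_assign_top_ball:
  assumes "\<And>U. openin T U \<Longrightarrow> pseudometric_on (stalk U) (d U)"
    and "a \<in> Pi\<^sub>E {U. openin T U} stalk"
  shows "openin (assign_top T stalk d)
           {b \<in> Pi\<^sub>E {U. openin T U} stalk. assign_dist T d a b < ereal r}"
  unfolding assign_top_def
proof (rule openin_pm_topology_ball[OF _ assms(2)])
  fix a b c assume "a \<in> Pi\<^sub>E {U. openin T U} stalk" "b \<in> Pi\<^sub>E {U. openin T U} stalk"
    "c \<in> Pi\<^sub>E {U. openin T U} stalk"
  then show "assign_dist T d a c \<le> assign_dist T d a b + assign_dist T d b c"
    unfolding assign_dist_def using assms(1) by (intro SUP_pseudometric_triangle) auto
qed

lemma topspace_ShvPA_top:
  "topspace (ShvPA_top T stalk d) = Pi\<^sub>E (Incl T) (Cont stalk d) \<times> Pi\<^sub>E {U. openin T U} stalk"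
  unfolding ShvPA_top_def unif_top_def assign_top_def by simp

lemma openin_ShvPA_top_ball:
  assumes pm: "\<And>U. openin T U \<Longrightarrow> pseudometric_on (stalk U) (d U)"
    and p: "p \<in> Incl T" and Ra: "(R, a) \<in> topspace (ShvPA_top T stalk d)"
  shows "openin (ShvPA_top T stalk d)
           {z \<in> topspace (ShvPA_top T stalk d).
              unif_dist (stalk (snd p)) (d (fst p)) (R p) (fst z p) < ereal r \<and>
              assign_dist T d a (snd z) < ereal s}"
    (is "openin ?X ?N")
proof -
  let ?B = "{g \<in> Cont stalk d p. unif_dist (stalk (snd p)) (d (fst p)) (R p) g < ereal r}"
  let ?A = "{b \<in> Pi\<^sub>E {U. openin T U} stalk. assign_dist T d a b < ereal s}"
  have coords: "fst z p \<in> Cont stalk d p" "snd z \<in> Pi\<^sub>E {U. openin T U} stalk"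
    if "z \<in> topspace ?X" for z
    using that p unfolding topspace_ShvPA_top by auto
  have "continuous_map ?X (unif_top stalk d p) ((\<lambda>R. R p) \<circ> fst)"
    unfolding ShvPA_top_def
    by (rule continuous_map_compose[OF continuous_map_fst continuous_map_product_projection[OF p]])
  moreover have "openin (unif_top stalk d p) ?B"
  proof (rule openin_unif_top_ball)
    show "pseudometric_on (stalk (fst p)) (d (fst p))"
      using pm p unfolding Incl_def by auto
    show "R p \<in> Cont stalk d p"
      using coords(1)[OF Ra] by simp
  qed
  ultimately have "openin ?X {z \<in> topspace ?X. fst z p \<in> ?B}"
    using openin_continuous_map_preimage by fastforce
  moreover have "openin ?X {z \<in> topspace ?X. snd z \<in> ?A}"
  proof (rule openin_continuous_map_preimage)
    show "continuous_map ?X (assign_top T stalk d) snd"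
      unfolding ShvPA_top_def by (rule continuous_map_snd)
    show "openin (assign_top T stalk d) ?A"
      using pm coords(2)[OF Ra] by (intro openin_assign_top_ball) simp_all
  qed
  ultimately have "openin ?X ({z \<in> topspace ?X. fst z p \<in> ?B} \<inter> {z \<in> topspace ?X. snd z \<in> ?A})"
    by (rule openin_Int)
  also have "{z \<in> topspace ?X. fst z p \<in> ?B} \<inter> {z \<in> topspace ?X. snd z \<in> ?A} = ?N"
    using coords by blast
  finally show ?thesis .
qed

lemma continuous_map_restriction_discrepancy:
  assumes pm: "\<And>U. openin T U \<Longrightarrow> pseudometric_on (stalk U) (d U)" and p: "p \<in> Incl T"
  shows "continuous_map (ShvPA_top T stalk d) euclideanreal
           (\<lambda>(R, a). d (fst p) (R p (a (snd p))) (a (fst p)))"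
  unfolding Met_TC.continuous_map_to_metric[unfolded mtopology_is_euclidean mball_eq_ball]
proof (intro ballI allI impI)
  let ?X = "ShvPA_top T stalk d" and ?U = "fst p" and ?V = "snd p"
  have UV: "openin T ?U" "openin T ?V"
    using p unfolding Incl_def by auto
  fix z and e :: real assume z: "z \<in> topspace ?X" and "e > 0"
  obtain R a where z_eq: "z = (R, a)"
    by fastforce
  have RC: "R p \<in> Cont stalk d p" and a: "a \<in> Pi\<^sub>E {U. openin T U} stalk"
    using z p unfolding z_eq topspace_ShvPA_top by auto
  have stalks: "a ?U \<in> stalk ?U" "a ?V \<in> stalk ?V"
    using a UV by auto
  have "pm_continuous (stalk ?V) (d ?V) (d ?U) (R p)" and "e / 3 > 0"
    using RC \<open>e > 0\<close> unfolding Cont_def by simp_all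
  then obtain \<delta> where "\<delta> > 0"
    and \<delta>: "\<forall>y\<in>stalk ?V. d ?V (a ?V) y < \<delta> \<longrightarrow> d ?U (R p (a ?V)) (R p y) < e / 3"
    using stalks(2) unfolding pm_continuous_def by blast
  define N where "N = {z \<in> topspace ?X.
      unif_dist (stalk ?V) (d ?U) (R p) (fst z p) < ereal (e / 3) \<and>
      assign_dist T d a (snd z) < ereal (min \<delta> (e / 3))}"
  have "openin ?X N"
    unfolding N_def using pm p z[unfolded z_eq] by (rule openin_ShvPA_top_ball)
  moreover have "z \<in> N"
  proof -
    have "unif_dist (stalk ?V) (d ?U) (R p) (R p) < ereal (e / 3)"
      using pm[OF UV(1)] RC \<open>e / 3 > 0\<close> by (rule unif_dist_self_less)
    moreover have "min \<delta> (e / 3) > 0"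
      using \<open>\<delta> > 0\<close> \<open>e / 3 > 0\<close> by simp
    then have "assign_dist T d a a < ereal (min \<delta> (e / 3))"
      using pm a by (intro assign_dist_self_less)
    ultimately show ?thesis
      unfolding N_def z_eq using z[unfolded z_eq] by simp
  qed
  moreover have "\<bar>d ?U (R p (a ?V)) (a ?U) - d ?U (R' p (a' ?V)) (a' ?U)\<bar> < e"
    if "(R', a') \<in> N" for R' a'
  proof -
    have R'C: "R' p \<in> Cont stalk d p" and a': "a' \<in> Pi\<^sub>E {U. openin T U} stalk"
      and ud: "unif_dist (stalk ?V) (d ?U) (R p) (R' p) < ereal (e / 3)"
      and ad: "assign_dist T d a a' < ereal (min \<delta> (e / 3))"
      using that p unfolding N_def topspace_ShvPA_top by auto
    have stalks': "a' ?U \<in> stalk ?U" "a' ?V \<in> stalk ?V"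
      using a' UV by auto
    have "d ?U (R p (a ?V)) (R p (a' ?V)) < e / 3"
      using \<delta> stalks'(2) assign_dist_lessD[OF ad UV(2)] by simp
    moreover have "d ?U (R p (a' ?V)) (R' p (a' ?V)) < e / 3"
      using unif_dist_lessD[OF ud stalks'(2)] .
    moreover have "d ?U (a ?U) (a' ?U) < e / 3"
      using assign_dist_lessD[OF ad UV(1)] by simp
    moreover have "\<bar>d ?U (R p (a ?V)) (a ?U) - d ?U (R' p (a' ?V)) (a' ?U)\<bar>
        \<le> d ?U (R p (a ?V)) (R p (a' ?V)) + d ?U (R p (a' ?V)) (R' p (a' ?V)) + d ?U (a ?U) (a' ?U)"
      using pm[OF UV(1)] stalks stalks' Cont_mem_stalk[OF RC] Cont_mem_stalk[OF R'C]
      by (intro pseudometric_on_dist_diff_le) simp_all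
    ultimately show ?thesis
      by linarith
  qed
  ultimately show "\<exists>N. openin ?X N \<and> z \<in> N \<and>
      (\<forall>y\<in>N. (\<lambda>(R, a). d ?U (R p (a ?V)) (a ?U)) y \<in> ball ((\<lambda>(R, a). d ?U (R p (a ?V)) (a ?U)) z) e)"
    unfolding z_eq by (auto simp: dist_real_def)
qed

lemma continuous_map_real_SUP:
  assumes "finite I" "I \<noteq> {}" "\<And>i. i \<in> I \<Longrightarrow> continuous_map X euclideanreal (f i)"
  shows "continuous_map X euclideanreal (\<lambda>x. SUP i\<in>I. f i x)"
  using assms
proof (induction I rule: finite_ne_induct)
  case (singleton i)
  then show ?case
    by simp
next
  case (insert i I)
  have "(SUP j\<in>insert i I. f j x) = max (f i x) (SUP j\<in>I. f j x)" for x
    using insert.hyps by (simp add: cSup_insert sup_max)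
  then show ?case
    using insert by (simp add: continuous_map_real_max)
qed

lemma finite_Incl: "finite (topspace T) \<Longrightarrow> finite (Incl T)"
proof -
  assume "finite (topspace T)"
  moreover have "Incl T \<subseteq> Pow (topspace T) \<times> Pow (topspace T)"
    unfolding Incl_def using openin_subset by fastforce
  ultimately show ?thesis
    by (meson finite_Pow_iff finite_SigmaI finite_subset)
qed

lemma continuous_map_consistency_radius:
  assumes "finite (topspace T)" and "\<And>U. openin T U \<Longrightarrow> pseudometric_on (stalk U) (d U)"
  shows "continuous_map (ShvPA_top T stalk d) euclideanreal (\<lambda>(R, a). consistency_radius T d R a)"
proof -
  have "({}, {}) \<in> Incl T"
    unfolding Incl_def by simp
  then have "continuous_map (ShvPA_top T stalk d) euclideanreal
      (\<lambda>z. SUP p\<in>Incl T. (\<lambda>(R, a). d (fst p) (R p (a (snd p))) (a (fst p))) z)"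
    using assms by (intro continuous_map_real_SUP finite_Incl continuous_map_restriction_discrepancy) auto
  then show ?thesis
    unfolding consistency_radius_def by (simp add: case_prod_beta')
qed

theorem theorem21:
  fixes T :: "'x topology"
    and stalk :: "'x set \<Rightarrow> 'a set"
    and d :: "'x set \<Rightarrow> 'a \<Rightarrow> 'a \<Rightarrow> real"
    and S :: "'x set \<times> 'x set \<Rightarrow> 'a \<Rightarrow> 'a"
  assumes "finite (topspace T)"
    and "sheaf_pm T stalk d S"
  shows "continuous_map (subtopology (ShvPA_top T stalk d) (ShvPA_class T stalk d S))
           euclideanreal (\<lambda>(R, a). consistency_radius T d R a)"
proof -
  have "\<And>U. openin T U \<Longrightarrow> pseudometric_on (stalk U) (d U)"
    using assms(2) unfolding sheaf_pm_def by simp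
  with assms(1) show ?thesis
    by (intro continuous_map_from_subtopology continuous_map_consistency_radius)
qed

end
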